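(* For the Byzantine-tolerant algorithm described in the context, under the fair distributed daemon and any Byzantine behaviour: if $\gamma$ is a degree-stabilized configuration such that $I_\gamma$ is not a maximal independent set of the subgraph induced by $V_2\cup I_\gamma$, then the configuration $\gamma'$ reached after two rounds starting from $\gamma$ satisfies $I_\gamma\subsetneq I_{\gamma'}$ with probability at least $\frac{1}{(\Delta+1)e}$.
   Context: Network and model. $G=(V,E)$ is a finite simple undirected graph; $N(u)$ is the open neighbourhood of $u$, $N[u]=N(u)\cup\{u\}$, $\deg(u)=|N(u)|$, $\Delta=\max_{u\in V}\deg(u)$. Nodes are anonymous. Each node holds local variables; a configuration is an assignment of values to all local variables. A rule "guard $\to$ command" is enabled on $u$ in $\gamma$ if its guard (a predicate on the variables of $u$ and its neighbours) holds; its command rewrites only $u$'s variables, possibly randomly. $u$ is activable if some rule is enabled on it. A transition $\gamma\xrightarrow{t}\gamma'$ is given by a nonempty set $t$ of moves $(u,r)$ with $r$ enabled on $u$ in $\gamma$, at most one per node, all executed simultaneously from the values in $\gamma$, with independent random choices. An execution is a sequence of consecutive transitions chosen by a daemon. The fair distributed daemon may choose any such $t$, subject to fairness: no node may remain activable forever without being activated. Probabilities are in the worst case over the daemon's and Byzantine nodes' strategies. Rounds. The rounds of an execution are consecutive segments of transitions: the first round starts at the beginning of the execution, each subsequent round starts immediately after the previous one ends, and the current round ends as soon as every node $u\in V$ has either been activated in at least one transition of the round or been non-activable in at least one configuration of the round. Byzantine nodes. A subset $B\subseteq V$ consists of Byzantine nodes: always activable and, when activated, they may set their variables to arbitrary values.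 $d(u,B)$ is the graph distance from $u$ to $B$ and $V_i=\{u\in V: d(u,B)>i\}$. Algorithm. Each node $u$ has variables $s_u\in\{\bot,\top\}$ and $x_u\in\mathbb{N}$; $Rand(q)$ returns $1$ with probability $q$, else $0$, independently. Non-Byzantine nodes follow the rules: (Refresh) $x_u\neq \deg(u)\ \to\ x_u:=\deg(u)$. (Candidacy?) $x_u=\deg(u)\wedge s_u=\bot\wedge \forall v\in N(u),\ s_v=\bot\ \to$ if $Rand\big(\frac{1}{1+\max\{x_v: v\in N[u]\}}\big)=1$ then $s_u:=\top$. (Withdrawal) $x_u=\deg(u)\wedge s_u=\top\wedge \exists v\in N(u),\ s_v=\top\ \to\ s_u:=\bot$. For a configuration $\gamma$, $I_\gamma=\{u\in V_1: s_u^\gamma=\top \text{ and } \forall v\in N(u),\ s_v^\gamma=\bot\}$. $\gamma$ is degree-stabilized if $x_u^\gamma=\deg(u)$ for every non-Byzantine node $u$. *)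

theory Defs
  imports "HOL-Probability.Probability"
begin

text \<open>The vertex set V is the (finite) universe of the type 'a; the graph is given by a
symmetric irreflexive adjacency relation E.  A configuration is a pair (s, x) with
s u = True meaning s_u = top and s u = False meaning s_u = bot.\<close>

type_synonym 'a cfg = "('a \<Rightarrow> bool) \<times> ('a \<Rightarrow> nat)"

definition nbrs :: "('a \<Rightarrow> 'a \<Rightarrow> bool) \<Rightarrow> 'a \<Rightarrow> 'a set" where
  "nbrs E u = {v. E u v}"

definition deg :: "('a \<Rightarrow> 'a \<Rightarrow> bool) \<Rightarrow> 'a \<Rightarrow> nat" where
  "deg E u = card (nbrs E u)"

definition maxdeg :: "('a::finite \<Rightarrow> 'a \<Rightarrow> bool) \<Rightarrow> nat" where
  "maxdeg E = Max (range (deg E))"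

text \<open>Distance: d(u,B) > i iff no walk of length at most i from u reaches B.\<close>
definition Vset :: "('a \<Rightarrow> 'a \<Rightarrow> bool) \<Rightarrow> 'a set \<Rightarrow> nat \<Rightarrow> 'a set" where
  "Vset E B i = {u. \<forall>b\<in>B. (u, b) \<notin> ({(p, q). E p q}\<^sup>=) ^^ i}"

definition refresh_en :: "('a \<Rightarrow> 'a \<Rightarrow> bool) \<Rightarrow> 'a cfg \<Rightarrow> 'a \<Rightarrow> bool" where
  "refresh_en E \<gamma> u \<longleftrightarrow> snd \<gamma> u \<noteq> deg E u"

definition cand_en :: "('a \<Rightarrow> 'a \<Rightarrow> bool) \<Rightarrow> 'a cfg \<Rightarrow> 'a \<Rightarrow> bool" where
  "cand_en E \<gamma> u \<longleftrightarrow> snd \<gamma> u = deg E u \<and> \<not> fst \<gamma> u \<and> (\<forall>v. E u v \<longrightarrow> \<not> fst \<gamma> v)"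

definition withdraw_en :: "('a \<Rightarrow> 'a \<Rightarrow> bool) \<Rightarrow> 'a cfg \<Rightarrow> 'a \<Rightarrow> bool" where
  "withdraw_en E \<gamma> u \<longleftrightarrow> snd \<gamma> u = deg E u \<and> fst \<gamma> u \<and> (\<exists>v. E u v \<and> fst \<gamma> v)"

definition activable :: "('a \<Rightarrow> 'a \<Rightarrow> bool) \<Rightarrow> 'a set \<Rightarrow> 'a cfg \<Rightarrow> 'a \<Rightarrow> bool" where
  "activable E B \<gamma> u \<longleftrightarrow> u \<in> B \<or> refresh_en E \<gamma> u \<or> cand_en E \<gamma> u \<or> withdraw_en E \<gamma> u"

definition cand_prob :: "('a::finite \<Rightarrow> 'a \<Rightarrow> bool) \<Rightarrow> 'a cfg \<Rightarrow> 'a \<Rightarrow> real" where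
  "cand_prob E \<gamma> u = 1 / (1 + real (Max {snd \<gamma> v | v. v = u \<or> E u v}))"

text \<open>One transition: the nodes of A are activated simultaneously; activated Byzantine nodes
take the values byz u; activated correct nodes execute their (unique) enabled rule; the
Rand call of node u returns 1 iff its coin c u is < the probability parameter.\<close>
definition step :: "('a::finite \<Rightarrow> 'a \<Rightarrow> bool) \<Rightarrow> 'a set \<Rightarrow> 'a cfg \<Rightarrow> 'a set
    \<Rightarrow> ('a \<Rightarrow> bool \<times> nat) \<Rightarrow> ('a \<Rightarrow> real) \<Rightarrow> 'a cfg" where
  "step E B \<gamma> A byz c =
    ((\<lambda>u. if u \<notin> A then fst \<gamma> u
          else if u \<in> B then fst (byz u)
          else if cand_en E \<gamma> u then (c u < cand_prob E \<gamma> u)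
          else if withdraw_en E \<gamma> u then False
          else fst \<gamma> u),
     (\<lambda>u. if u \<notin> A then snd \<gamma> u
          else if u \<in> B then snd (byz u)
          else if refresh_en E \<gamma> u then deg E u
          else snd \<gamma> u))"

text \<open>A (combined daemon + Byzantine) strategy maps the history of configurations
(oldest first) to the set of activated nodes and the values written by Byzantine nodes.\<close>
type_synonym 'a strategy = "'a cfg list \<Rightarrow> 'a set \<times> ('a \<Rightarrow> bool \<times> nat)"

definition valid_strategy :: "('a \<Rightarrow> 'a \<Rightarrow> bool) \<Rightarrow> 'a set \<Rightarrow> 'a strategy \<Rightarrow> bool" where
  "valid_strategy E B \<sigma> \<longleftrightarrow> (\<forall>h. h \<noteq> [] \<longrightarrow>
      fst (\<sigma> h) \<subseteq> {u. activable E B (last h) u} \<and>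
      (fst (\<sigma> h) = {} \<longleftrightarrow> (\<forall>u. \<not> activable E B (last h) u)))"

text \<open>Coins: omega (u, i) is the uniform [0,1] random number used by node u in transition i.\<close>
primrec hist :: "('a::finite \<Rightarrow> 'a \<Rightarrow> bool) \<Rightarrow> 'a set \<Rightarrow> 'a cfg \<Rightarrow> 'a strategy
    \<Rightarrow> ('a \<times> nat \<Rightarrow> real) \<Rightarrow> nat \<Rightarrow> 'a cfg list" where
  "hist E B \<gamma> \<sigma> \<omega> 0 = [\<gamma>]"
| "hist E B \<gamma> \<sigma> \<omega> (Suc i) =
     hist E B \<gamma> \<sigma> \<omega> i @ [step E B (last (hist E B \<gamma> \<sigma> \<omega> i))
        (fst (\<sigma> (hist E B \<gamma> \<sigma> \<omega> i))) (snd (\<sigma> (hist E B \<gamma> \<sigma> \<omega> i))) (\<lambda>u. \<omega> (u, i))]"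

definition cfg_seq :: "('a::finite \<Rightarrow> 'a \<Rightarrow> bool) \<Rightarrow> 'a set \<Rightarrow> 'a cfg \<Rightarrow> 'a strategy
    \<Rightarrow> ('a \<times> nat \<Rightarrow> real) \<Rightarrow> nat \<Rightarrow> 'a cfg" where
  "cfg_seq E B \<gamma> \<sigma> \<omega> i = last (hist E B \<gamma> \<sigma> \<omega> i)"

definition act_seq :: "('a::finite \<Rightarrow> 'a \<Rightarrow> bool) \<Rightarrow> 'a set \<Rightarrow> 'a cfg \<Rightarrow> 'a strategy
    \<Rightarrow> ('a \<times> nat \<Rightarrow> real) \<Rightarrow> nat \<Rightarrow> 'a set" where
  "act_seq E B \<gamma> \<sigma> \<omega> i = fst (\<sigma> (hist E B \<gamma> \<sigma> \<omega> i))"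

definition coin_space :: "('a \<times> nat \<Rightarrow> real) measure" where
  "coin_space = PiM UNIV (\<lambda>_. uniform_measure lborel {0..1})"

definition fair_exec :: "('a \<Rightarrow> 'a \<Rightarrow> bool) \<Rightarrow> 'a set \<Rightarrow> (nat \<Rightarrow> 'a cfg) \<Rightarrow> (nat \<Rightarrow> 'a set) \<Rightarrow> bool" where
  "fair_exec E B c act \<longleftrightarrow>
     (\<forall>u. \<not> (\<exists>n. \<forall>m\<ge>n. activable E B (c m) u \<and> u \<notin> act m))"

definition round_cond :: "('a \<Rightarrow> 'a \<Rightarrow> bool) \<Rightarrow> 'a set \<Rightarrow> (nat \<Rightarrow> 'a cfg) \<Rightarrow> (nat \<Rightarrow> 'a set)
    \<Rightarrow> nat \<Rightarrow> nat \<Rightarrow> bool" where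
  "round_cond E B c act a b \<longleftrightarrow>
     (\<forall>u. (\<exists>i\<in>{a..<b}. u \<in> act i) \<or> (\<exists>i\<in>{a..b}. \<not> activable E B (c i) u))"

text \<open>The round starting at configuration index a consists of transitions a..b-1.\<close>
definition round_end :: "('a \<Rightarrow> 'a \<Rightarrow> bool) \<Rightarrow> 'a set \<Rightarrow> (nat \<Rightarrow> 'a cfg) \<Rightarrow> (nat \<Rightarrow> 'a set)
    \<Rightarrow> nat \<Rightarrow> nat \<Rightarrow> bool" where
  "round_end E B c act a b \<longleftrightarrow>
     a < b \<and> round_cond E B c act a b \<and> (\<forall>b'. a < b' \<and> b' < b \<longrightarrow> \<not> round_cond E B c act a b')"

definition Iset :: "('a \<Rightarrow> 'a \<Rightarrow> bool) \<Rightarrow> 'a set \<Rightarrow> 'a cfg \<Rightarrow> 'a set" where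
  "Iset E B \<gamma> = {u \<in> Vset E B 1. fst \<gamma> u \<and> (\<forall>v. E u v \<longrightarrow> \<not> fst \<gamma> v)}"

definition deg_stabilized :: "('a \<Rightarrow> 'a \<Rightarrow> bool) \<Rightarrow> 'a set \<Rightarrow> 'a cfg \<Rightarrow> bool" where
  "deg_stabilized E B \<gamma> \<longleftrightarrow> (\<forall>u. u \<notin> B \<longrightarrow> snd \<gamma> u = deg E u)"

definition independent_in :: "('a \<Rightarrow> 'a \<Rightarrow> bool) \<Rightarrow> 'a set \<Rightarrow> 'a set \<Rightarrow> bool" where
  "independent_in E H S \<longleftrightarrow> S \<subseteq> H \<and> (\<forall>u\<in>S. \<forall>v\<in>S. \<not> E u v)"

definition maximal_indep_in :: "('a \<Rightarrow> 'a \<Rightarrow> bool) \<Rightarrow> 'a set \<Rightarrow> 'a set \<Rightarrow> bool" where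
  "maximal_indep_in E H S \<longleftrightarrow> independent_in E H S \<and>
     (\<forall>w\<in>H - S. \<not> independent_in E H (insert w S))"

end

theory Submission
  imports Defs
begin

text \<open>Since \<open>I\<close> is not maximal, some \<open>w \<in> V\<^sub>2\<close> has no node of \<open>I\<close> in its closed
  neighbourhood \<open>N[w]\<close>, and all of \<open>N[w] \<subseteq> V\<^sub>1\<close> behaves correctly. Call a transition
  risky if it activates a Candidacy-enabled node of \<open>N[w]\<close>.

  Without risky transitions, nodes of \<open>N[w]\<close> can only switch from \<open>\<top>\<close> to \<open>\<bottom>\<close>,
  and a \<open>\<top>\<close> node of \<open>N[w]\<close> outside \<open>I\<close> has a \<open>\<top>\<close> neighbour and is activable. A
  \<open>\<top>\<close> node of \<open>N[w]\<close> after the first round would thus have stayed activable and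
  unactivated during that round; so after it all of \<open>N[w]\<close> is \<open>\<bottom>\<close>, and in the second
  round \<open>w\<close> is neither activated (it is Candidacy-enabled, so that would be risky) nor
  non-activable. Hence some node of \<open>N[w]\<close> must join \<open>I\<close> within two rounds.

  At the first risky transition, pick an activated Candidacy-enabled \<open>u \<in> N[w]\<close>. Its coin
  succeeds with probability at least \<open>1/(\<Delta>+1)\<close>; each of its at most \<open>deg u\<close>
  activated Candidacy-enabled neighbours \<open>v\<close> uses a probability at most \<open>1/(deg u+1)\<close>,
  because \<open>x\<^sub>u = deg u\<close> enters the maximum at \<open>v\<close>. So with probability at least
  \<open>(1/(\<Delta>+1))(1-1/(deg u+1))\<^bsup>deg u\<^esup> \<ge> 1/((\<Delta>+1)e)\<close> all of them fail and \<open>u\<close>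
  joins \<open>I\<close>, which never loses members. The coins of that transition are independent of
  the history before it, so conditioning on the first risky transition gives the bound.\<close>

section \<open>Transitions\<close>

lemma Vset_1_iff: "u \<in> Vset E B 1 \<longleftrightarrow> (\<forall>b\<in>B. u \<noteq> b \<and> \<not> E u b)"
  unfolding Vset_def by auto

lemma Vset_1_not_Byzantine: "u \<in> Vset E B 1 \<Longrightarrow> u \<notin> B"
  unfolding Vset_1_iff by auto

lemma Vset_1_nbr_not_Byzantine: "u \<in> Vset E B 1 \<Longrightarrow> E u v \<Longrightarrow> v \<notin> B"
  unfolding Vset_1_iff by auto

lemma Vset_2_closed_nbr:
  assumes "w \<in> Vset E B 2" and "u = w \<or> E w u"
  shows "u \<in> Vset E B 1"
proof -
  have False if "b \<in> B" and "u = b \<or> E u b" for b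
  proof -
    let ?R = "{(p, q). E p q}\<^sup>="
    have "(w, u) \<in> ?R" and "(u, b) \<in> ?R"
      using assms(2) that(2) by auto
    then have "(w, b) \<in> ?R ^^ 2"
      by (metis numeral_2_eq_2 relpow_0_I relpow_Suc_I)
    with assms(1) that(1) show False
      unfolding Vset_def by auto
  qed
  then show ?thesis
    unfolding Vset_1_iff by auto
qed

lemma deg_stabilized_step:
  "deg_stabilized E B g \<Longrightarrow> deg_stabilized E B (step E B g A byz c)"
  unfolding deg_stabilized_def step_def refresh_en_def by auto

lemma activable_stabilized_iff:
  assumes "deg_stabilized E B g" and "u \<notin> B"
  shows "activable E B g u \<longleftrightarrow> cand_en E g u \<or> withdraw_en E g u"
  using assms unfolding deg_stabilized_def activable_def refresh_en_def by auto

lemma step_activated_withdraws: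
  assumes "deg_stabilized E B g" and "u \<notin> B" and "u \<in> A"
    and "activable E B g u" and "\<not> cand_en E g u"
  shows "\<not> fst (step E B g A byz c) u"
  using assms activable_stabilized_iff[OF assms(1,2)] unfolding step_def by auto

lemma step_top_imp_top:
  assumes "u \<notin> B" and "u \<in> A \<Longrightarrow> \<not> cand_en E g u" and "fst (step E B g A byz c) u"
  shows "fst g u"
  using assms unfolding step_def by (auto split: if_splits)

lemma Iset_step:
  assumes sym: "\<forall>u v. E u v \<longleftrightarrow> E v u" and u: "u \<in> Iset E B g"
  shows "u \<in> Iset E B (step E B g A byz c)"
proof -
  have uV: "u \<in> Vset E B 1" and top: "fst g u" and nbrs_bot: "\<forall>v. E u v \<longrightarrow> \<not> fst g v"
    using u unfolding Iset_def by auto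
  have "fst (step E B g A byz c) u"
    using top nbrs_bot Vset_1_not_Byzantine[OF uV]
    unfolding step_def cand_en_def withdraw_en_def by auto
  moreover have "\<not> fst (step E B g A byz c) v" if "E u v" for v
  proof -
    have "\<not> cand_en E g v"
      using top sym that unfolding cand_en_def by auto
    then show ?thesis
      using nbrs_bot that Vset_1_nbr_not_Byzantine[OF uV that] unfolding step_def by auto
  qed
  ultimately show ?thesis
    using uV unfolding Iset_def by auto
qed

lemma Iset_step_candidate:
  assumes uV: "u \<in> Vset E B 1" and "u \<in> A" and cand: "cand_en E g u"
    and "c u < cand_prob E g u"
    and rivals_lose: "\<And>v. E u v \<Longrightarrow> v \<in> A \<Longrightarrow> cand_en E g v \<Longrightarrow> cand_prob E g v \<le> c v"
  shows "u \<in> Iset E B (step E B g A byz c)"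
proof -
  have "fst (step E B g A byz c) u"
    using assms Vset_1_not_Byzantine[OF uV] unfolding step_def by auto
  moreover have "\<not> fst (step E B g A byz c) v" if "E u v" for v
  proof -
    have "\<not> fst g v"
      using cand that unfolding cand_en_def by auto
    then show ?thesis
      using rivals_lose[OF that] Vset_1_nbr_not_Byzantine[OF uV that]
      unfolding step_def withdraw_en_def by (auto simp: not_less)
  qed
  ultimately show ?thesis
    using uV unfolding Iset_def by auto
qed

lemma cand_prob_pos: "0 < cand_prob E g u"
  unfolding cand_prob_def by simp

lemma cand_prob_le_1: "cand_prob E g u \<le> 1"
  unfolding cand_prob_def by simp

lemma cand_prob_ge_inverse_maxdeg:
  fixes E :: "'a::finite \<Rightarrow> 'a \<Rightarrow> bool"
  assumes st: "deg_stabilized E B g" and uV: "u \<in> Vset E B 1"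
  shows "1 / (real (maxdeg E) + 1) \<le> cand_prob E g u"
proof -
  have "snd g v \<le> maxdeg E" if "v = u \<or> E u v" for v
  proof -
    have "v \<notin> B"
      using that Vset_1_not_Byzantine[OF uV] Vset_1_nbr_not_Byzantine[OF uV] by blast
    then have "snd g v = deg E v"
      using st unfolding deg_stabilized_def by simp
    also have "\<dots> \<le> maxdeg E"
      unfolding maxdeg_def by (rule Max_ge) auto
    finally show ?thesis .
  qed
  then have "Max {snd g v | v. v = u \<or> E u v} \<le> maxdeg E"
    by (intro Max.boundedI) auto
  then show ?thesis
    unfolding cand_prob_def by (intro divide_left_mono) auto
qed

lemma cand_prob_nbr_le:
  fixes E :: "'a::finite \<Rightarrow> 'a \<Rightarrow> bool"
  assumes "deg_stabilized E B g" and "u \<notin> B" and "E v u"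
  shows "cand_prob E g v \<le> 1 / (1 + real (deg E u))"
proof -
  have "deg E u = snd g u"
    using assms by (simp add: deg_stabilized_def)
  also have "\<dots> \<le> Max {snd g x | x. x = v \<or> E v x}"
    by (rule Max_ge) (use assms(3) in auto)
  finally show ?thesis
    unfolding cand_prob_def by (intro divide_left_mono) auto
qed

section \<open>Two rounds without risky activations\<close>

locale execution =
  fixes E :: "'a::finite \<Rightarrow> 'a \<Rightarrow> bool" and B :: "'a set" and c :: "nat \<Rightarrow> 'a cfg"
    and act :: "nat \<Rightarrow> 'a set" and byz :: "nat \<Rightarrow> 'a \<Rightarrow> bool \<times> nat"
    and coin :: "nat \<Rightarrow> 'a \<Rightarrow> real"
  assumes sym: "\<forall>u v. E u v \<longleftrightarrow> E v u"
    and cfg_Suc: "\<And>i. c (Suc i) = step E B (c i) (act i) (byz i) (coin i)"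
    and act_activable: "\<And>i. act i \<subseteq> {u. activable E B (c i) u}"
    and stabilized_0: "deg_stabilized E B (c 0)"
begin

lemma stabilized: "deg_stabilized E B (c i)"
  by (induction i) (simp_all add: cfg_Suc stabilized_0 deg_stabilized_step)

lemma Iset_mono:
  assumes "i \<le> j"
  shows "Iset E B (c i) \<subseteq> Iset E B (c j)"
  using assms
proof (induction j rule: dec_induct)
  case (step j)
  then show ?case
    using Iset_step[OF sym] unfolding cfg_Suc by blast
qed simp

lemma top_persists_backwards:
  assumes "u \<notin> B" and calm: "\<forall>k<n. u \<in> act k \<longrightarrow> \<not> cand_en E (c k) u"
    and "i \<le> j" and "j \<le> n" and "fst (c j) u"
  shows "fst (c i) u"
  using assms(3-5)
proof (induction j rule: dec_induct)
  case (step k)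
  have "u \<in> act k \<Longrightarrow> \<not> cand_en E (c k) u"
    using calm step.prems(1) by simp
  moreover have "fst (step E B (c k) (act k) (byz k) (coin k)) u"
    using step.prems(2) unfolding cfg_Suc .
  ultimately have "fst (c k) u"
    by (rule step_top_imp_top[OF assms(1)])
  then show ?case
    using step.IH step.prems(1) by simp
qed simp

lemma top_outside_Iset_activable:
  assumes "u \<in> Vset E B 1" and "u \<notin> Iset E B (c j)" and "fst (c j) u"
  shows "activable E B (c j) u"
proof -
  have "withdraw_en E (c j) u"
    using assms stabilized[of j] Vset_1_not_Byzantine[OF assms(1)]
    unfolding Iset_def withdraw_en_def deg_stabilized_def by auto
  then show ?thesis
    unfolding activable_def by simp
qed

lemma top_not_activated:
  assumes "u \<notin> B" and calm: "\<forall>k<n. u \<in> act k \<longrightarrow> \<not> cand_en E (c k) u"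
    and "i < j" and "j \<le> n" and "fst (c j) u"
  shows "u \<notin> act i"
proof
  assume act: "u \<in> act i"
  then have "\<not> fst (c (Suc i)) u"
    using act_activable[of i] calm assms(3,4) step_activated_withdraws[OF stabilized assms(1)]
    unfolding cfg_Suc by auto
  moreover have "fst (c (Suc i)) u"
    using top_persists_backwards[OF assms(1) calm _ assms(4,5)] assms(3) by simp
  ultimately show False
    by simp
qed

lemma not_top_after_first_round:
  assumes uV: "u \<in> Vset E B 1" and calm: "\<forall>k<n. u \<in> act k \<longrightarrow> \<not> cand_en E (c k) u"
    and not_I: "\<forall>k\<le>n. u \<notin> Iset E B (c k)"
    and round: "round_cond E B c act 0 b1" and "b1 \<le> j" and "j \<le> n"
  shows "\<not> fst (c j) u"
proof
  assume top: "fst (c j) u"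
  from round show False
    unfolding round_cond_def
  proof (elim allE disjE bexE)
    fix i assume "i \<in> {0..<b1}" and "u \<in> act i"
    then show False
      using top_not_activated[OF Vset_1_not_Byzantine[OF uV] calm _ _ top] assms by auto
  next
    fix i assume i: "i \<in> {0..b1}" and "\<not> activable E B (c i) u"
    moreover have "fst (c i) u"
      using top_persists_backwards[OF Vset_1_not_Byzantine[OF uV] calm _ _ top] i assms by auto
    ultimately show False
      using top_outside_Iset_activable[OF uV] not_I i assms by auto
  qed
qed

lemma closed_nbr_joins_Iset_in_two_rounds:
  assumes w: "w \<in> Vset E B 2"
    and round1: "round_cond E B c act 0 b1" and round2: "round_cond E B c act b1 b2"
    and "b1 \<le> b2"
    and calm: "\<forall>k<b2. \<forall>u. (u = w \<or> E w u) \<longrightarrow> u \<in> act k \<longrightarrow> \<not> cand_en E (c k) u"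
  shows "\<exists>j\<le>b2. \<exists>u. (u = w \<or> E w u) \<and> u \<in> Iset E B (c j)"
proof (rule ccontr)
  assume "\<not> ?thesis"
  then have no_top: "\<not> fst (c j) u" if "u = w \<or> E w u" and "b1 \<le> j" and "j \<le> b2" for u j
    using not_top_after_first_round[OF Vset_2_closed_nbr[OF w] _ _ round1] calm that by blast
  have wB: "w \<notin> B"
    using Vset_1_not_Byzantine[OF Vset_2_closed_nbr[OF w]] by simp
  from round2 show False
    unfolding round_cond_def
  proof (elim allE disjE bexE)
    fix i assume i: "i \<in> {b1..<b2}" and "w \<in> act i"
    then have "withdraw_en E (c i) w"
      using act_activable[of i] calm activable_stabilized_iff[OF stabilized wB] by auto
    then show False
      using no_top[of w i] i unfolding withdraw_en_def by auto
  next
    fix i assume i: "i \<in> {b1..b2}" and "\<not> activable E B (c i) w"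
    then obtain v where "E w v" and "fst (c i) v"
      using no_top[of w i] stabilized[of i] wB
      unfolding activable_def cand_en_def deg_stabilized_def by auto
    then show False
      using no_top[of v i] i by auto
  qed
qed

end

lemma round_end_exists:
  fixes c :: "nat \<Rightarrow> 'a::finite cfg"
  assumes "fair_exec E B c act"
  shows "\<exists>b. round_end E B c act a b"
proof -
  have "\<forall>u. \<exists>m\<ge>a. \<not> activable E B (c m) u \<or> u \<in> act m"
    using assms unfolding fair_exec_def by blast
  then obtain m where m: "\<And>u. a \<le> m u \<and> (\<not> activable E B (c (m u)) u \<or> u \<in> act (m u))"
    by metis
  define b0 where "b0 = Suc (Max (range m))"
  have m_less: "m u < b0" for u
    unfolding b0_def by (simp add: le_imp_less_Suc)
  have "round_cond E B c act a b0"
    unfolding round_cond_def using m m_less by (meson atLeastAtMost_iff atLeastLessThan_iff less_imp_le)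
  moreover have "a < b0"
    using m m_less by (meson le_less_trans)
  ultimately obtain b where "a < b \<and> round_cond E B c act a b"
    and "\<forall>b'<b. \<not> (a < b' \<and> round_cond E B c act a b')"
    using exists_least_iff[where P = "\<lambda>b. a < b \<and> round_cond E B c act a b"] by blast
  then show ?thesis
    unfolding round_end_def by blast
qed

section \<open>Coins and histories\<close>

abbreviation coin_distr :: "real measure" where
  "coin_distr \<equiv> uniform_measure lborel {0..1}"

lemma prob_space_coin_distr: "prob_space coin_distr"
  by (intro prob_space_uniform_measure) auto

lemma coin_space_eq: "coin_space = PiM UNIV (\<lambda>_. coin_distr)"
  by (simp add: coin_space_def)

lemma prob_space_coin_space: "prob_space coin_space"
  unfolding coin_space_eq by (intro prob_space_PiM prob_space_coin_distr)

lemma space_coin_space: "space coin_space = UNIV"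
  by (auto simp: coin_space_eq space_PiM PiE_def extensional_def)

lemma length_hist: "length (hist E B \<gamma> \<sigma> \<omega> i) = Suc i"
  by (induction i) auto

lemma take_hist: "j \<le> i \<Longrightarrow> take (Suc j) (hist E B \<gamma> \<sigma> \<omega> i) = hist E B \<gamma> \<sigma> \<omega> j"
proof (induction i rule: dec_induct)
  case (step i)
  then show ?case
    using length_hist[of E B \<gamma> \<sigma> \<omega> i] by simp
qed (simp add: length_hist)

lemma hist_cong:
  "(\<And>u j. j < i \<Longrightarrow> \<omega> (u, j) = \<omega>' (u, j)) \<Longrightarrow> hist E B \<gamma> \<sigma> \<omega> i = hist E B \<gamma> \<sigma> \<omega>' i"
  by (induction i) auto

lemma cfg_seq_0: "cfg_seq E B \<gamma> \<sigma> \<omega> 0 = \<gamma>"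
  by (simp add: cfg_seq_def)

lemma cfg_seq_Suc: "cfg_seq E B \<gamma> \<sigma> \<omega> (Suc i) =
  step E B (cfg_seq E B \<gamma> \<sigma> \<omega> i) (act_seq E B \<gamma> \<sigma> \<omega> i) (snd (\<sigma> (hist E B \<gamma> \<sigma> \<omega> i)))
    (\<lambda>u. \<omega> (u, i))"
  by (simp add: cfg_seq_def act_seq_def)

text \<open>Since a transition sees the coins only through these comparisons, histories are
  measurable into a discrete space.\<close>
lemma step_coin_outcomes:
  "step E B g A byz c = step E B g A byz (\<lambda>u. if c u < cand_prob E g u then 0 else 1)"
proof -
  have "0 < cand_prob E g u" and "\<not> 1 < cand_prob E g u" for u
    using cand_prob_pos cand_prob_le_1 by (simp_all add: not_less)
  then show ?thesis
    unfolding step_def by (auto simp: fun_eq_iff)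
qed

lemma coin_measurable:
  assumes "k \<in> J"
  shows "(\<lambda>\<omega>. \<omega> k) \<in> borel_measurable (PiM J (\<lambda>_. coin_distr))"
proof -
  have "(\<lambda>\<omega>. \<omega> k) \<in> measurable (PiM J (\<lambda>_. coin_distr)) coin_distr"
    using assms by (rule measurable_component_singleton)
  then show ?thesis
    by (simp add: measurable_def)
qed

lemma coin_outcomes_measurable:
  assumes "UNIV \<times> {i} \<subseteq> J"
  shows "(\<lambda>\<omega> (u::'a::finite). \<omega> (u, i) < (p u :: real))
    \<in> measurable (PiM J (\<lambda>_. coin_distr)) (count_space UNIV)"
proof -
  have "(\<lambda>\<omega>. \<omega> (u, i)) \<in> borel_measurable (PiM J (\<lambda>_. coin_distr))" for u
    using assms by (intro coin_measurable) auto
  then have "Measurable.pred (PiM J (\<lambda>_. coin_distr)) (\<lambda>\<omega>. \<forall>u. (\<omega> (u, i) < p u) = a u)"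
    for a :: "'a \<Rightarrow> bool"
    by measurable
  then show ?thesis
    by (intro measurable_count_space_eq2_countable[THEN iffD2] conjI ballI)
      (auto simp: pred_def fun_eq_iff vimage_def Int_def conj_commute)
qed

lemma hist_measurable:
  fixes \<gamma> :: "'a::finite cfg"
  assumes "UNIV \<times> {..<i} \<subseteq> J"
  shows "(\<lambda>\<omega>. hist E B \<gamma> \<sigma> \<omega> i) \<in> measurable (PiM J (\<lambda>_. coin_distr)) (count_space UNIV)"
  using assms
proof (induction i)
  case (Suc i)
  let ?next = "\<lambda>h r. h @ [step E B (last h) (fst (\<sigma> h)) (snd (\<sigma> h)) (\<lambda>u. if r u then 0 else 1)]"
  let ?outcomes = "\<lambda>h \<omega> u. \<omega> (u, i) < cand_prob E (last h) u"
  have "(\<lambda>\<omega>. ?next (hist E B \<gamma> \<sigma> \<omega> i) (?outcomes (hist E B \<gamma> \<sigma> \<omega> i) \<omega>))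
      \<in> measurable (PiM J (\<lambda>_. coin_distr)) (count_space UNIV)"
  proof (rule measurable_compose_countable'[where I = UNIV
        and f = "\<lambda>h \<omega>. ?next h (?outcomes h \<omega>)" and g = "\<lambda>\<omega>. hist E B \<gamma> \<sigma> \<omega> i"])
    show "(\<lambda>\<omega>. ?next h (?outcomes h \<omega>)) \<in> measurable (PiM J (\<lambda>_. coin_distr)) (count_space UNIV)"
      if "h \<in> UNIV" for h
    proof (rule measurable_compose[where f = "?outcomes h" and g = "?next h"])
      show "?outcomes h \<in> measurable (PiM J (\<lambda>_. coin_distr)) (count_space UNIV)"
        using Suc.prems by (intro coin_outcomes_measurable) auto
    qed (rule measurable_count_space)
    show "(\<lambda>\<omega>. hist E B \<gamma> \<sigma> \<omega> i) \<in> measurable (PiM J (\<lambda>_. coin_distr)) (count_space UNIV)"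
      by (rule Suc.IH) (use Suc.prems in auto)
  qed simp
  moreover have "hist E B \<gamma> \<sigma> \<omega> (Suc i) =
      ?next (hist E B \<gamma> \<sigma> \<omega> i) (?outcomes (hist E B \<gamma> \<sigma> \<omega> i) \<omega>)" for \<omega>
    by (simp add: step_coin_outcomes[symmetric])
  ultimately show ?case
    by (simp only:)
qed simp

lemma hist_measurable_coin_space[measurable]:
  "(\<lambda>\<omega>. hist E B (\<gamma> :: 'a::finite cfg) \<sigma> \<omega> i) \<in> measurable coin_space (count_space UNIV)"
  unfolding coin_space_eq by (rule hist_measurable) simp

lemma pred_hist:
  "Measurable.pred coin_space (\<lambda>\<omega>. P (hist E B (\<gamma> :: 'a::finite cfg) \<sigma> \<omega> i))"
  by (rule measurable_compose[OF hist_measurable_coin_space]) simp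

lemma pred_act_seq[measurable]:
  "Measurable.pred coin_space (\<lambda>\<omega>. u \<in> act_seq E B (\<gamma> :: 'a::finite cfg) \<sigma> \<omega> i)"
  unfolding act_seq_def by (rule pred_hist)

lemma pred_activable_cfg_seq[measurable]:
  "Measurable.pred coin_space (\<lambda>\<omega>. activable E B (cfg_seq E B (\<gamma> :: 'a::finite cfg) \<sigma> \<omega> i) u)"
  unfolding cfg_seq_def by (rule pred_hist)

lemma pred_Iset_cfg_seq[measurable]:
  "Measurable.pred coin_space (\<lambda>\<omega>. X \<subset> Iset E B (cfg_seq E B (\<gamma> :: 'a::finite cfg) \<sigma> \<omega> i))"
  unfolding cfg_seq_def by (rule pred_hist)

section \<open>Conditioning on the past\<close>

lemma (in prob_space) indep_var_prob_section_bound: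
  fixes q :: real
  assumes indep: "indep_var M1 X M2 Y" and Z: "Z \<in> sets (M1 \<Otimes>\<^sub>M M2)" and A: "A \<in> sets M1"
    and "0 \<le> q" and slice: "\<And>x. x \<in> A \<Longrightarrow> q \<le> prob {\<omega> \<in> space M. (x, Y \<omega>) \<in> Z}"
  shows "q * prob {\<omega> \<in> space M. X \<omega> \<in> A} \<le> prob {\<omega> \<in> space M. X \<omega> \<in> A \<and> (X \<omega>, Y \<omega>) \<in> Z}"
proof -
  have X: "random_variable M1 X" and Y: "random_variable M2 Y"
    and joint: "distr M M1 X \<Otimes>\<^sub>M distr M M2 Y = distr M (M1 \<Otimes>\<^sub>M M2) (\<lambda>\<omega>. (X \<omega>, Y \<omega>))"
    using indep unfolding indep_var_distribution_eq by auto
  interpret DY: prob_space "distr M M2 Y"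
    by (rule prob_space_distr[OF Y])
  let ?ZA = "Z \<inter> A \<times> space M2"
  have ZA: "?ZA \<in> sets (M1 \<Otimes>\<^sub>M M2)"
    using Z A by auto
  have "ennreal q * emeasure M {\<omega> \<in> space M. X \<omega> \<in> A}
      = ennreal q * emeasure (distr M M1 X) A"
    by (simp add: emeasure_distr[OF X A] vimage_def Int_def conj_commute)
  also have "\<dots> = (\<integral>\<^sup>+x. ennreal q * indicator A x \<partial>distr M M1 X)"
    using A by (simp add: nn_integral_cmult_indicator)
  also have "\<dots> \<le> (\<integral>\<^sup>+x. emeasure (distr M M2 Y) (Pair x -` ?ZA) \<partial>distr M M1 X)"
  proof (rule nn_integral_mono)
    fix x
    show "ennreal q * indicator A x \<le> emeasure (distr M M2 Y) (Pair x -` ?ZA)"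
    proof (cases "x \<in> A")
      case True
      have "Pair x -` Z \<in> sets M2"
        using Z by measurable
      then have "emeasure (distr M M2 Y) (Pair x -` ?ZA) = emeasure M {\<omega> \<in> space M. (x, Y \<omega>) \<in> Z}"
        using True measurable_space[OF Y]
        by (subst emeasure_distr[OF Y]) (auto intro!: arg_cong2[where f = emeasure])
      then show ?thesis
        using True slice[OF True] \<open>0 \<le> q\<close> by (simp add: emeasure_eq_measure)
    qed simp
  qed
  also have "\<dots> = emeasure (distr M M1 X \<Otimes>\<^sub>M distr M M2 Y) ?ZA"
    using ZA by (intro DY.emeasure_pair_measure_alt[symmetric]) simp
  also have "\<dots> = emeasure M {\<omega> \<in> space M. X \<omega> \<in> A \<and> (X \<omega>, Y \<omega>) \<in> Z}"
    unfolding joint using measurable_space[OF Y]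
    by (subst emeasure_distr[OF measurable_Pair[OF X Y] ZA]) (auto intro!: arg_cong2[where f = emeasure])
  finally show ?thesis
    using \<open>0 \<le> q\<close> by (simp add: emeasure_eq_measure ennreal_mult[symmetric] ennreal_le_iff)
qed

lemma indep_vars_coins: "prob_space.indep_vars coin_space (\<lambda>_. coin_distr) (\<lambda>k \<omega>. \<omega> k) UNIV"
proof -
  interpret prob_space coin_space
    by (rule prob_space_coin_space)
  have coin: "(\<lambda>\<omega>. \<omega> k) \<in> measurable coin_space coin_distr" for k
    unfolding coin_space_eq by (intro measurable_component_singleton) auto
  have "distr coin_space (PiM UNIV (\<lambda>_. coin_distr)) (\<lambda>\<omega>. \<lambda>k\<in>UNIV. \<omega> k) = coin_space"
    by (simp add: restrict_UNIV coin_space_eq)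
  also have "\<dots> = PiM UNIV (\<lambda>k. distr coin_space coin_distr (\<lambda>\<omega>. \<omega> k))"
    unfolding coin_space_eq
    by (intro PiM_cong refl distr_PiM_component[symmetric] prob_space_coin_distr) auto
  finally show ?thesis
    using coin by (subst indep_vars_iff_distr_eq_PiM) auto
qed

lemma prob_hist_and_next_coins_ge:
  fixes \<gamma> :: "'a::finite cfg" and Q :: "'a cfg list \<Rightarrow> ('a \<Rightarrow> real) \<Rightarrow> bool"
  assumes Q: "\<And>h. Measurable.pred (PiM UNIV (\<lambda>_. borel)) (Q h)"
    and bound: "\<And>h. h \<in> H \<Longrightarrow> q \<le> measure coin_space {\<omega> \<in> space coin_space. Q h (\<lambda>u. \<omega> (u, i))}"
    and "0 \<le> q"
  shows "q * measure coin_space {\<omega> \<in> space coin_space. hist E B \<gamma> \<sigma> \<omega> i \<in> H}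
    \<le> measure coin_space {\<omega> \<in> space coin_space.
         hist E B \<gamma> \<sigma> \<omega> i \<in> H \<and> Q (hist E B \<gamma> \<sigma> \<omega> i) (\<lambda>u. \<omega> (u, i))}"
proof -
  interpret prob_space coin_space
    by (rule prob_space_coin_space)
  let ?past = "PiM (UNIV \<times> {..<i}) (\<lambda>_. coin_distr)"
  let ?now = "PiM (UNIV \<times> {i}) (\<lambda>_. coin_distr)"
  let ?X = "\<lambda>\<omega>. restrict \<omega> (UNIV \<times> {..<i})"
  let ?Y = "\<lambda>\<omega>. restrict \<omega> (UNIV \<times> {i})"
  let ?A = "{x \<in> space ?past. hist E B \<gamma> \<sigma> x i \<in> H}"
  let ?Z = "{p \<in> space (?past \<Otimes>\<^sub>M ?now). hist E B \<gamma> \<sigma> (fst p) i \<in> H \<and>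
      Q (hist E B \<gamma> \<sigma> (fst p) i) (\<lambda>u. snd p (u, i))}"
  have hist_past: "hist E B \<gamma> \<sigma> (?X \<omega>) i = hist E B \<gamma> \<sigma> \<omega> i" for \<omega>
    by (rule hist_cong) auto
  have indep: "indep_var ?past ?X ?now ?Y"
    by (rule indep_var_restrict[OF indep_vars_coins]) auto
  have hist_m: "(\<lambda>x. hist E B \<gamma> \<sigma> x i) \<in> measurable ?past (count_space UNIV)"
    by (rule hist_measurable) auto
  have now_m: "(\<lambda>y u. y (u, i)) \<in> measurable ?now (PiM UNIV (\<lambda>_. borel))"
    by (auto intro!: measurable_PiM_single' coin_measurable)
  have "?A \<in> sets ?past"
    using hist_m by measurable
  moreover have "?Z \<in> sets (?past \<Otimes>\<^sub>M ?now)"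
  proof -
    have "(\<lambda>p. (\<lambda>h p. h \<in> H \<and> Q h (\<lambda>u. snd p (u, i))) (hist E B \<gamma> \<sigma> (fst p) i) p)
        \<in> measurable (?past \<Otimes>\<^sub>M ?now) (count_space UNIV)"
    proof (rule measurable_compose_countable'[where I = UNIV
          and f = "\<lambda>h p. h \<in> H \<and> Q h (\<lambda>u. snd p (u, i))" and g = "\<lambda>p. hist E B \<gamma> \<sigma> (fst p) i"])
      show "Measurable.pred (?past \<Otimes>\<^sub>M ?now) (\<lambda>p. h \<in> H \<and> Q h (\<lambda>u. snd p (u, i)))"
        if "h \<in> UNIV" for h
        using measurable_compose[OF measurable_compose[OF measurable_snd now_m] Q[of h]]
        by (cases "h \<in> H") simp_all
      show "(\<lambda>p. hist E B \<gamma> \<sigma> (fst p) i) \<in> measurable (?past \<Otimes>\<^sub>M ?now) (count_space UNIV)"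
        by (rule measurable_compose[OF measurable_fst hist_m])
    qed simp
    then show ?thesis
      by (simp add: pred_def)
  qed
  moreover have "q \<le> prob {\<omega> \<in> space coin_space. (x, ?Y \<omega>) \<in> ?Z}" if "x \<in> ?A" for x
  proof -
    have "{\<omega> \<in> space coin_space. (x, ?Y \<omega>) \<in> ?Z}
        = {\<omega> \<in> space coin_space. Q (hist E B \<gamma> \<sigma> x i) (\<lambda>u. \<omega> (u, i))}"
      using that by (auto simp: space_pair_measure space_PiM)
    then show ?thesis
      using that bound by simp
  qed
  ultimately have "q * prob {\<omega> \<in> space coin_space. ?X \<omega> \<in> ?A}
      \<le> prob {\<omega> \<in> space coin_space. ?X \<omega> \<in> ?A \<and> (?X \<omega>, ?Y \<omega>) \<in> ?Z}"
    using \<open>0 \<le> q\<close> by (intro indep_var_prob_section_bound[OF indep]) auto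
  then show ?thesis
    by (simp add: hist_past space_pair_measure space_PiM space_coin_space)
qed

section \<open>The probability of a successful candidacy\<close>

lemma measure_coin_space_win_lose:
  fixes S :: "'a set"
  assumes "finite S" and uS: "u \<notin> S" and a: "0 \<le> a" "a \<le> 1"
    and b: "\<forall>v\<in>S. 0 \<le> b v \<and> b v \<le> 1"
  shows "measure coin_space {\<omega> \<in> space coin_space. \<omega> (u, i) < a \<and> (\<forall>v\<in>S. b v \<le> \<omega> (v, i))}
    = a * (\<Prod>v\<in>S. 1 - b v)"
proof -
  define K where "K = insert (u, i) ((\<lambda>v. (v, i)) ` S)"
  define I where "I k = (if k = (u, i) then {..<a} else {b (fst k)..})" for k :: "'a \<times> nat"
  have K: "finite K" and uK: "(u, i) \<notin> (\<lambda>v. (v, i)) ` S"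
    using \<open>finite S\<close> uS by (auto simp: K_def)
  have space: "space (PiM (UNIV :: ('a \<times> nat) set) (\<lambda>_. coin_distr)) = UNIV"
    using space_coin_space by (simp add: coin_space_eq)
  have "{\<omega> \<in> space coin_space. \<omega> (u, i) < a \<and> (\<forall>v\<in>S. b v \<le> \<omega> (v, i))}
      = prod_emb UNIV (\<lambda>_. coin_distr) K (Pi\<^sub>E K I)"
    unfolding coin_space_eq prod_emb_def K_def I_def using uS
    by (auto simp: restrict_PiE_iff space Pi_iff) (metis atLeast_iff fst_conv)
  also have "emeasure (PiM UNIV (\<lambda>_. coin_distr)) \<dots> = (\<Prod>k\<in>K. emeasure coin_distr (I k))"
    using K by (intro emeasure_PiM_emb) (auto simp: prob_space_coin_distr I_def)
  also have "\<dots> = emeasure coin_distr (I (u, i)) * (\<Prod>k\<in>(\<lambda>v. (v, i)) ` S. emeasure coin_distr (I k))"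
    unfolding K_def using uK \<open>finite S\<close> by (simp add: prod.insert)
  also have "(\<Prod>k\<in>(\<lambda>v. (v, i)) ` S. emeasure coin_distr (I k)) = (\<Prod>v\<in>S. emeasure coin_distr {b v..})"
    using uS by (subst prod.reindex) (auto simp: inj_on_def I_def intro!: prod.cong)
  also have "I (u, i) = {..<a}"
    by (simp add: I_def)
  also have "emeasure coin_distr {..<a} = ennreal a"
  proof -
    have "{0..1} \<inter> {..<a} = {0..<a}"
      using a by auto
    then show ?thesis
      using a by (simp add: emeasure_uniform_measure divide_ennreal_def)
  qed
  also have "(\<Prod>v\<in>S. emeasure coin_distr {b v..}) = (\<Prod>v\<in>S. ennreal (1 - b v))"
    using b by (intro prod.cong) (auto simp: emeasure_uniform_measure divide_ennreal_def)
  also have "ennreal a * (\<Prod>v\<in>S. ennreal (1 - b v)) = ennreal (a * (\<Prod>v\<in>S. 1 - b v))"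
    using a b by (simp add: prod_ennreal ennreal_mult prod_nonneg)
  finally show ?thesis
    using a b by (simp add: coin_space_eq measure_def prod_nonneg)
qed

lemma exp_minus_one_le_power: "exp (-1) \<le> (real d / (real d + 1)) ^ d"
proof (cases "d = 0")
  case False
  have "(1 + 1 / real d) ^ d \<le> exp 1"
    using exp_ge_one_plus_x_over_n_power_n[of d 1] False by simp
  moreover have "0 < (1 + 1 / real d) ^ d"
    by (simp add: add_pos_nonneg)
  ultimately have "1 / exp 1 \<le> 1 / (1 + 1 / real d) ^ d"
    by (intro divide_left_mono) auto
  also have "1 / (1 + 1 / real d) ^ d = (real d / (real d + 1)) ^ d"
    using False by (simp add: field_simps power_one_over)
  finally show ?thesis
    by (simp add: exp_minus inverse_eq_divide)
qed simp

lemma win_lose_prob_ge: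
  assumes "finite S" and "card S \<le> d" and b: "\<forall>v\<in>S. 0 \<le> b v \<and> b v \<le> 1 / (1 + real d)"
    and a: "1 / (real D + 1) \<le> a"
  shows "1 / ((real D + 1) * exp 1) \<le> a * (\<Prod>v\<in>S. 1 - b v)"
proof -
  let ?r = "real d / (real d + 1)"
  have "exp (-1) \<le> ?r ^ d"
    by (rule exp_minus_one_le_power)
  also have "\<dots> \<le> ?r ^ card S"
    using \<open>card S \<le> d\<close> by (intro power_decreasing) auto
  also have "\<dots> \<le> (\<Prod>v\<in>S. 1 - b v)"
    using b by (subst prod_constant[symmetric], intro prod_mono) (auto simp: field_simps)
  finally have prod: "exp (-1) \<le> (\<Prod>v\<in>S. 1 - b v)" .
  have "1 / ((real D + 1) * exp 1) = 1 / (real D + 1) * exp (-1)"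
    by (simp add: exp_minus inverse_eq_divide)
  also have "\<dots> \<le> a * (\<Prod>v\<in>S. 1 - b v)"
    using a prod by (intro mult_mono) (auto intro: order.trans[OF _ a])
  finally show ?thesis .
qed

lemma (in prob_space) prob_ge_by_first_hits:
  fixes q :: real and F :: "nat \<Rightarrow> 'a set"
  assumes F: "disjoint_family F" "\<And>i. F i \<in> events" and G: "G \<in> events"
    and never: "space M - (\<Union>i. F i) \<subseteq> G"
    and hit: "\<And>i. q * prob (F i) \<le> prob (F i \<inter> G)" and "q \<le> 1"
  shows "q \<le> prob G"
proof -
  let ?U = "\<Union>i. F i"
  have disj: "disjoint_family (\<lambda>i. F i \<inter> G)"
    using F(1) unfolding disjoint_family_on_def by blast
  have "(\<lambda>i. q * prob (F i)) sums (q * prob ?U)"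
    using F by (intro sums_mult finite_measure_UNION) auto
  moreover have "(\<lambda>i. prob (F i \<inter> G)) sums prob (\<Union>i. F i \<inter> G)"
    using F G disj by (intro finite_measure_UNION) auto
  ultimately have "q * prob ?U \<le> prob (\<Union>i. F i \<inter> G)"
    using hit by (rule sums_le[rotated 1])
  moreover have "prob ((space M - ?U) \<union> (\<Union>i. F i \<inter> G)) = prob (space M - ?U) + prob (\<Union>i. F i \<inter> G)"
    using F G by (intro finite_measure_Union) auto
  moreover have "prob ((space M - ?U) \<union> (\<Union>i. F i \<inter> G)) \<le> prob G"
    using F G never by (intro finite_measure_mono) auto
  moreover have "prob (space M - ?U) = 1 - prob ?U"
    using F by (intro prob_compl) auto
  moreover have "(1 - q) * (1 - prob ?U) \<ge> 0"
    using \<open>q \<le> 1\<close> by simp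
  ultimately show ?thesis
    by (simp add: algebra_simps)
qed

section \<open>A node uncovered by \<open>I\<close>\<close>

lemma not_maximal_Iset_uncovered:
  assumes "\<not> maximal_indep_in E (Vset E B 2 \<union> Iset E B \<gamma>) (Iset E B \<gamma>)"
  obtains w where "w \<in> Vset E B 2" and "\<And>u. u = w \<or> E w u \<Longrightarrow> u \<notin> Iset E B \<gamma>"
proof -
  have "independent_in E (Vset E B 2 \<union> Iset E B \<gamma>) (Iset E B \<gamma>)"
    unfolding independent_in_def Iset_def by auto
  then show ?thesis
    using assms that unfolding maximal_indep_in_def independent_in_def by auto
qed

locale uncovered_node =
  fixes E :: "'a::finite \<Rightarrow> 'a \<Rightarrow> bool" and B :: "'a set" and \<gamma> :: "'a cfg"
    and \<sigma> :: "'a strategy" and w :: 'a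
  assumes sym: "\<forall>u v. E u v \<longleftrightarrow> E v u"
    and irrefl: "\<forall>u. \<not> E u u"
    and valid: "valid_strategy E B \<sigma>"
    and fair: "\<forall>\<omega>\<in>space coin_space. fair_exec E B (cfg_seq E B \<gamma> \<sigma> \<omega>) (act_seq E B \<gamma> \<sigma> \<omega>)"
    and stab: "deg_stabilized E B \<gamma>"
    and w_Vset_2: "w \<in> Vset E B 2"
    and closed_nbr_not_Iset: "\<And>u. u = w \<or> E w u \<Longrightarrow> u \<notin> Iset E B \<gamma>"
begin

abbreviation conf where "conf \<equiv> cfg_seq E B \<gamma> \<sigma>"
abbreviation activated where "activated \<equiv> act_seq E B \<gamma> \<sigma>"
abbreviation history where "history \<equiv> hist E B \<gamma> \<sigma>"

definition nbhd :: "'a set" where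
  "nbhd = {u. u = w \<or> E w u}"

definition risky :: "'a cfg list \<Rightarrow> bool" where
  "risky h \<longleftrightarrow> (\<exists>u\<in>nbhd. u \<in> fst (\<sigma> h) \<and> cand_en E (last h) u)"

text \<open>The stabilization conjunct holds on every reachable history; recording it lets the
  probability bound for the next coins be proved for each history separately.\<close>
definition first_risky :: "nat \<Rightarrow> 'a cfg list set" where
  "first_risky i = {h. risky h \<and> (\<forall>j<i. \<not> risky (take (Suc j) h)) \<and> deg_stabilized E B (last h)}"

definition contender :: "'a cfg list \<Rightarrow> 'a" where
  "contender h = (SOME u. u \<in> nbhd \<and> u \<in> fst (\<sigma> h) \<and> cand_en E (last h) u)"

definition rivals :: "'a cfg list \<Rightarrow> 'a set" where
  "rivals h = {v. E (contender h) v \<and> v \<in> fst (\<sigma> h) \<and> cand_en E (last h) v}"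

definition wins :: "'a cfg list \<Rightarrow> ('a \<Rightarrow> real) \<Rightarrow> bool" where
  "wins h z \<longleftrightarrow> z (contender h) < cand_prob E (last h) (contender h) \<and>
     (\<forall>v\<in>rivals h. cand_prob E (last h) v \<le> z v)"

definition hits :: "nat \<Rightarrow> ('a \<times> nat \<Rightarrow> real) set" where
  "hits i = {\<omega> \<in> space coin_space. history \<omega> i \<in> first_risky i}"

definition grows :: "('a \<times> nat \<Rightarrow> real) set" where
  "grows = {\<omega> \<in> space coin_space. \<exists>b1 b2.
     round_end E B (conf \<omega>) (activated \<omega>) 0 b1 \<and> round_end E B (conf \<omega>) (activated \<omega>) b1 b2 \<and>
     Iset E B \<gamma> \<subset> Iset E B (conf \<omega> b2)}"

lemma execution_conf:
  "execution E B (conf \<omega>) (activated \<omega>) (\<lambda>i. snd (\<sigma> (history \<omega> i))) (\<lambda>i u. \<omega> (u, i))"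
proof
  show "activated \<omega> i \<subseteq> {u. activable E B (conf \<omega> i) u}" for i
    using valid length_hist[of E B \<gamma> \<sigma> \<omega> i]
    unfolding valid_strategy_def act_seq_def cfg_seq_def by (metis Zero_not_Suc list.size(3))
qed (use sym stab in \<open>simp_all add: cfg_seq_Suc cfg_seq_0\<close>)

lemma nbhd_Vset_1: "u \<in> nbhd \<Longrightarrow> u \<in> Vset E B 1"
  unfolding nbhd_def using Vset_2_closed_nbr[OF w_Vset_2] by blast

lemma risky_history_iff:
  "risky (history \<omega> i) \<longleftrightarrow> (\<exists>u\<in>nbhd. u \<in> activated \<omega> i \<and> cand_en E (conf \<omega> i) u)"
  by (simp add: risky_def act_seq_def cfg_seq_def)

lemma contender:
  assumes "risky h"
  shows "contender h \<in> nbhd" and "contender h \<in> fst (\<sigma> h)" and "cand_en E (last h) (contender h)"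
  using someI_ex[OF assms[unfolded risky_def Bex_def]] unfolding contender_def by auto

lemma grows_if_nbhd_joins_Iset:
  assumes \<omega>: "\<omega> \<in> space coin_space"
    and joins: "\<And>n. (\<forall>j<n. \<not> risky (history \<omega> j)) \<or> (\<exists>j\<le>n. \<exists>u\<in>nbhd. u \<in> Iset E B (conf \<omega> j))"
  shows "\<omega> \<in> grows"
proof -
  interpret execution E B "conf \<omega>" "activated \<omega>" "\<lambda>i. snd (\<sigma> (history \<omega> i))" "\<lambda>i u. \<omega> (u, i)"
    by (rule execution_conf)
  have fair_\<omega>: "fair_exec E B (conf \<omega>) (activated \<omega>)"
    using fair \<omega> by blast
  obtain b1 b2 where b1: "round_end E B (conf \<omega>) (activated \<omega>) 0 b1"
    and b2: "round_end E B (conf \<omega>) (activated \<omega>) b1 b2"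
    using round_end_exists[OF fair_\<omega>] by blast
  have "\<exists>j\<le>b2. \<exists>u\<in>nbhd. u \<in> Iset E B (conf \<omega> j)"
    using joins[of b2]
  proof
    assume "\<forall>j<b2. \<not> risky (history \<omega> j)"
    then have "\<forall>k<b2. \<forall>u. (u = w \<or> E w u) \<longrightarrow> u \<in> activated \<omega> k \<longrightarrow> \<not> cand_en E (conf \<omega> k) u"
      unfolding risky_history_iff nbhd_def by blast
    moreover have "round_cond E B (conf \<omega>) (activated \<omega>) 0 b1"
      and "round_cond E B (conf \<omega>) (activated \<omega>) b1 b2" and "b1 \<le> b2"
      using b1 b2 unfolding round_end_def by simp_all
    ultimately show ?thesis
      using closed_nbr_joins_Iset_in_two_rounds[OF w_Vset_2] unfolding nbhd_def by blast
  qed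
  then obtain j u where "j \<le> b2" and "u \<in> nbhd" and "u \<in> Iset E B (conf \<omega> j)"
    by blast
  then have "u \<in> Iset E B (conf \<omega> b2) - Iset E B \<gamma>"
    using Iset_mono closed_nbr_not_Iset unfolding nbhd_def by blast
  moreover have "Iset E B \<gamma> \<subseteq> Iset E B (conf \<omega> b2)"
    using Iset_mono[of 0 b2] by (simp add: cfg_seq_0)
  ultimately show ?thesis
    unfolding grows_def using \<omega> b1 b2 by blast
qed

lemma never_risky_grows:
  assumes "\<omega> \<in> space coin_space - (\<Union>i. hits i)"
  shows "\<omega> \<in> grows"
proof (rule grows_if_nbhd_joins_Iset)
  interpret execution E B "conf \<omega>" "activated \<omega>" "\<lambda>i. snd (\<sigma> (history \<omega> i))" "\<lambda>i u. \<omega> (u, i)"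
    by (rule execution_conf)
  have "\<not> risky (history \<omega> i)" for i
  proof
    assume "risky (history \<omega> i)"
    then obtain i0 where "risky (history \<omega> i0)" and "\<forall>j<i0. \<not> risky (history \<omega> j)"
      using exists_least_iff[where P = "\<lambda>i. risky (history \<omega> i)"] by blast
    then have "\<omega> \<in> hits i0"
      using assms stabilized[of i0] take_hist[of _ i0 E B \<gamma> \<sigma> \<omega>]
      unfolding hits_def first_risky_def cfg_seq_def by auto
    then show False
      using assms by blast
  qed
  then show "(\<forall>j<n. \<not> risky (history \<omega> j)) \<or> (\<exists>j\<le>n. \<exists>u\<in>nbhd. u \<in> Iset E B (conf \<omega> j))" for n
    by blast
qed (use assms in blast)

lemma winning_grows:
  assumes hit: "\<omega> \<in> hits i" and win: "wins (history \<omega> i) (\<lambda>u. \<omega> (u, i))"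
  shows "\<omega> \<in> grows"
proof (rule grows_if_nbhd_joins_Iset)
  let ?u = "contender (history \<omega> i)"
  have risky: "risky (history \<omega> i)" and calm: "\<forall>j<i. \<not> risky (history \<omega> j)"
    using hit take_hist[of _ i E B \<gamma> \<sigma> \<omega>] unfolding hits_def first_risky_def by auto
  have "?u \<in> Iset E B (conf \<omega> (Suc i))"
    unfolding cfg_seq_Suc
  proof (rule Iset_step_candidate)
    show "?u \<in> Vset E B 1"
      using nbhd_Vset_1 contender(1)[OF risky] .
  qed (use win contender[OF risky] in \<open>auto simp: wins_def rivals_def act_seq_def cfg_seq_def\<close>)
  then show "(\<forall>j<n. \<not> risky (history \<omega> j)) \<or> (\<exists>j\<le>n. \<exists>u\<in>nbhd. u \<in> Iset E B (conf \<omega> j))" for n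
    using calm contender(1)[OF risky] by (cases "i < n") (auto intro!: exI[of _ "Suc i"])
qed (use hit in \<open>simp add: hits_def\<close>)

lemma prob_wins_ge:
  assumes "h \<in> first_risky i"
  shows "1 / ((real (maxdeg E) + 1) * exp 1)
    \<le> measure coin_space {\<omega> \<in> space coin_space. wins h (\<lambda>u. \<omega> (u, i))}"
proof -
  let ?g = "last h" and ?u = "contender h"
  have st: "deg_stabilized E B ?g" and uV: "?u \<in> Vset E B 1"
    using assms contender(1) nbhd_Vset_1 unfolding first_risky_def by auto
  have "1 / ((real (maxdeg E) + 1) * exp 1)
      \<le> cand_prob E ?g ?u * (\<Prod>v\<in>rivals h. 1 - cand_prob E ?g v)"
  proof (rule win_lose_prob_ge)
    show "card (rivals h) \<le> deg E ?u"
      unfolding deg_def nbrs_def rivals_def by (rule card_mono) auto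
    show "\<forall>v\<in>rivals h. 0 \<le> cand_prob E ?g v \<and> cand_prob E ?g v \<le> 1 / (1 + real (deg E ?u))"
      using cand_prob_pos[of E ?g] cand_prob_nbr_le[OF st Vset_1_not_Byzantine[OF uV]] sym
      by (auto simp: rivals_def less_imp_le)
  qed (simp_all add: cand_prob_ge_inverse_maxdeg[OF st uV])
  also have "\<dots> = measure coin_space {\<omega> \<in> space coin_space.
      \<omega> (?u, i) < cand_prob E ?g ?u \<and> (\<forall>v\<in>rivals h. cand_prob E ?g v \<le> \<omega> (v, i))}"
    using irrefl cand_prob_pos[of E ?g] cand_prob_le_1[of E ?g]
    by (intro measure_coin_space_win_lose[symmetric]) (auto simp: rivals_def less_imp_le)
  finally show ?thesis
    by (simp add: wins_def)
qed

lemma wins_measurable: "Measurable.pred (PiM UNIV (\<lambda>_. borel)) (wins h)"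
  unfolding wins_def by measurable

lemma hits_disjoint: "disjoint_family hits"
proof -
  have "hits i \<inter> hits j = {}" if "i < j" for i j
    using that take_hist[of i j E B \<gamma> \<sigma>] unfolding hits_def first_risky_def by auto
  then show ?thesis
    unfolding disjoint_family_on_def by (metis inf_commute linorder_neqE_nat)
qed

lemma hits_sets: "hits i \<in> sets coin_space"
  using pred_hist[of "\<lambda>h. h \<in> first_risky i" E B \<gamma> \<sigma> i] unfolding pred_def hits_def .

lemma grows_sets: "grows \<in> sets coin_space"
proof -
  have "Measurable.pred coin_space (\<lambda>\<omega>. \<exists>b1 b2.
     round_end E B (conf \<omega>) (activated \<omega>) 0 b1 \<and> round_end E B (conf \<omega>) (activated \<omega>) b1 b2 \<and>
     Iset E B \<gamma> \<subset> Iset E B (conf \<omega> b2))"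
    unfolding round_end_def round_cond_def by measurable
  then show ?thesis
    unfolding grows_def pred_def .
qed

lemma prob_grows_ge: "1 / ((real (maxdeg E) + 1) * exp 1) \<le> measure coin_space grows"
proof -
  interpret prob_space coin_space
    by (rule prob_space_coin_space)
  let ?q = "1 / ((real (maxdeg E) + 1) * exp 1)"
  have "?q * prob (hits i) \<le> prob (hits i \<inter> grows)" for i
  proof -
    have "?q * prob (hits i) \<le> prob {\<omega> \<in> space coin_space.
        history \<omega> i \<in> first_risky i \<and> wins (history \<omega> i) (\<lambda>u. \<omega> (u, i))}"
      unfolding hits_def by (rule prob_hist_and_next_coins_ge[OF wins_measurable prob_wins_ge]) simp_all
    also have "\<dots> \<le> prob (hits i \<inter> grows)"
    proof (rule finite_measure_mono)
      show "{\<omega> \<in> space coin_space. history \<omega> i \<in> first_risky i \<and> wins (history \<omega> i) (\<lambda>u. \<omega> (u, i))}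
          \<subseteq> hits i \<inter> grows"
        using winning_grows unfolding hits_def by blast
    qed (use hits_sets grows_sets in blast)
    finally show ?thesis .
  qed
  moreover have "1 * 1 \<le> (real (maxdeg E) + 1) * exp 1"
    by (intro mult_mono) simp_all
  then have "?q \<le> 1"
    by simp
  moreover have "space coin_space - (\<Union>i. hits i) \<subseteq> grows"
    using never_risky_grows by blast
  ultimately show ?thesis
    by (intro prob_ge_by_first_hits[OF hits_disjoint hits_sets grows_sets])
qed

end

theorem mainTheorem10:
  fixes E :: "'a::finite \<Rightarrow> 'a \<Rightarrow> bool" and B :: "'a set"
    and \<gamma> :: "'a cfg" and \<sigma> :: "'a strategy"
  assumes sym: "\<forall>u v. E u v \<longleftrightarrow> E v u"
    and irrefl: "\<forall>u. \<not> E u u"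
    and valid: "valid_strategy E B \<sigma>"
    and fair: "\<forall>\<omega>\<in>space coin_space.
                 fair_exec E B (cfg_seq E B \<gamma> \<sigma> \<omega>) (act_seq E B \<gamma> \<sigma> \<omega>)"
    and stab: "deg_stabilized E B \<gamma>"
    and notmax: "\<not> maximal_indep_in E (Vset E B 2 \<union> Iset E B \<gamma>) (Iset E B \<gamma>)"
  shows "measure coin_space
           {\<omega> \<in> space coin_space. \<exists>b1 b2.
              round_end E B (cfg_seq E B \<gamma> \<sigma> \<omega>) (act_seq E B \<gamma> \<sigma> \<omega>) 0 b1 \<and>
              round_end E B (cfg_seq E B \<gamma> \<sigma> \<omega>) (act_seq E B \<gamma> \<sigma> \<omega>) b1 b2 \<and>
              Iset E B \<gamma> \<subset> Iset E B (cfg_seq E B \<gamma> \<sigma> \<omega> b2)}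
         \<ge> 1 / ((real (maxdeg E) + 1) * exp 1)"
proof -
  obtain w where "w \<in> Vset E B 2" and "\<And>u. u = w \<or> E w u \<Longrightarrow> u \<notin> Iset E B \<gamma>"
    using not_maximal_Iset_uncovered[OF notmax] by blast
  then interpret uncovered_node E B \<gamma> \<sigma> w
    using sym irrefl valid fair stab by unfold_locales
  show ?thesis
    using prob_grows_ge unfolding grows_def by simp
qed

end
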